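(* Let $\mathcal{A}\subseteq 2^{[n]}$ be an arbitrary family of sets. For $A\in\mathcal{A}$ let $c(A)$ be the maximum $k$ such that $A$ belongs to a $k$-chain consisting of sets from $\mathcal{A}$. Then \[ \sum_{A\in\mathcal{A}} \frac{1}{\binom{n}{|A|}\,c(A)} \le 1, \] and equality holds if and only if $\mathcal{A}$ is a nonempty union of complete levels, i.e. $\mathcal{A}=\bigcup_{i\in I}\binom{[n]}{i}$ for some nonempty $I\subseteq\{0,1,\dots,n\}$.
   Context: $[n]=\{1,\dots,n\}$ and $2^{[n]}$ is its power set. A $k$-chain is a collection of $k$ sets $A_1\subsetneq A_2\subsetneq\cdots\subsetneq A_k$. $\binom{[n]}{i}$ denotes the family of all $i$-element subsets of $[n]$ (the $i$-th level). *)

theory Defs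
  imports Complex_Main
begin

definition is_chain_in :: "'a set set \<Rightarrow> 'a set list \<Rightarrow> bool" where
  "is_chain_in F cs \<longleftrightarrow> set cs \<subseteq> F \<and> sorted_wrt (\<subset>) cs"

definition chain_rank :: "'a set set \<Rightarrow> 'a set \<Rightarrow> nat" where
  "chain_rank F A = Max {length cs | cs. is_chain_in F cs \<and> A \<in> set cs}"

definition level :: "nat \<Rightarrow> nat \<Rightarrow> nat set set" where
  "level n i = {S. S \<subseteq> {1..n} \<and> card S = i}"

end

theory Submission
  imports Defs "HOL-Combinatorics.Multiset_Permutations"
begin

text \<open>The LYM argument with weights. For a permutation \<open>\<sigma>\<close> of the ground set \<open>X\<close>, the members
  of \<open>\<A>\<close> that are initial segments of \<open>\<sigma>\<close> form a chain, so each of them has rank at least the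
  number \<open>m\<close> of such members and their weights \<open>1 / c(A)\<close> add up to at most \<open>m \<cdot> 1/m = 1\<close>.
  A set \<open>A\<close> is an initial segment of exactly \<open>|A|! (|X| - |A|)!\<close> permutations, so summing over
  all \<open>|X|!\<close> permutations gives the inequality. Equality forces the bound to be tight for every
  permutation; comparing two permutations that differ by swapping the elements in positions
  \<open>|A|\<close> and \<open>|A| + 1\<close> shows that \<open>\<A>\<close> is closed under exchanging one element, hence is a union
  of full levels. Conversely, in a union of \<open>k\<close> levels every member has rank \<open>k\<close> and every
  permutation meets exactly \<open>k\<close> members.\<close>

lemma distinct_if_sorted_wrt_psubset: "sorted_wrt (\<subset>) cs \<Longrightarrow> distinct cs"
  by (induction cs) auto

lemma length_le_card_if_is_chain_in:
  assumes "finite F" "is_chain_in F cs"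
  shows "length cs \<le> card F"
proof -
  have "length cs = card (set cs)"
    using assms(2) by (simp add: is_chain_in_def distinct_card distinct_if_sorted_wrt_psubset)
  also have "\<dots> \<le> card F"
    using assms by (auto simp: is_chain_in_def intro: card_mono)
  finally show ?thesis .
qed

lemma finite_chain_lengths:
  assumes "finite F"
  shows "finite {length cs | cs. is_chain_in F cs \<and> A \<in> set cs}"
  by (rule finite_subset[of _ "{..card F}"]) (auto dest: length_le_card_if_is_chain_in[OF assms])

lemma chain_rank_ge:
  assumes "finite F" "is_chain_in F cs" "A \<in> set cs"
  shows "length cs \<le> chain_rank F A"
  unfolding chain_rank_def using assms finite_chain_lengths[OF assms(1), of A]
  by (intro Max_ge) auto

lemma chain_rank_le:
  assumes "finite F" "A \<in> F" "\<And>cs. is_chain_in F cs \<Longrightarrow> length cs \<le> k"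
  shows "chain_rank F A \<le> k"
proof -
  have "is_chain_in F [A]"
    using assms(2) by (simp add: is_chain_in_def)
  then show ?thesis
    unfolding chain_rank_def using assms finite_chain_lengths[OF assms(1), of A]
    by (subst Max_le_iff) auto
qed

text \<open>A chain of finite sets has strictly increasing cardinalities, so it meets each level once.\<close>
lemma chain_rank_le_card_levels:
  assumes "finite F" "\<And>B. B \<in> F \<Longrightarrow> finite B" "A \<in> F"
  shows "chain_rank F A \<le> card (card ` F)"
proof (rule chain_rank_le[OF assms(1,3)])
  fix cs assume chain: "is_chain_in F cs"
  have "sorted_wrt (\<lambda>X Y. card X < card Y) cs"
    using chain assms(2) by (auto simp: is_chain_in_def intro: psubset_card_mono
        elim!: sorted_wrt_mono_rel[rotated])
  then have "distinct (map card cs)"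
    by (metis sorted_wrt_map strict_sorted_iff)
  then have "length cs = card (card ` set cs)"
    by (metis distinct_card length_map set_map)
  also have "\<dots> \<le> card (card ` F)"
    using chain assms(1) by (auto simp: is_chain_in_def intro!: card_mono)
  finally show "length cs \<le> card (card ` F)" .
qed

lemma set_take_psubset:
  assumes "distinct xs" "i < j" "j \<le> length xs"
  shows "set (take i xs) \<subset> set (take j xs)"
proof -
  have "set (take i xs) \<subseteq> set (take j xs)"
    using assms by (simp add: set_take_subset_set_take)
  moreover have "card (set (take i xs)) \<noteq> card (set (take j xs))"
    using assms by (simp add: distinct_card)
  ultimately show ?thesis by auto
qed

definition prefix_members :: "'a set set \<Rightarrow> 'a list \<Rightarrow> 'a set set" where
  "prefix_members F \<sigma> = {A \<in> F. set (take (card A) \<sigma>) = A}"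

definition prefix_weight :: "'a set set \<Rightarrow> 'a list \<Rightarrow> real" where
  "prefix_weight F \<sigma> = (\<Sum>A\<in>prefix_members F \<sigma>. 1 / real (chain_rank F A))"

lemma finite_prefix_members: "finite F \<Longrightarrow> finite (prefix_members F \<sigma>)"
  by (simp add: prefix_members_def)

lemma chain_of_prefix_members:
  assumes X: "finite X" and F: "F \<subseteq> Pow X" and \<sigma>: "\<sigma> \<in> permutations_of_set X"
  obtains cs where "is_chain_in F cs" "set cs = prefix_members F \<sigma>"
proof -
  have "distinct \<sigma>" and len_\<sigma>: "length \<sigma> = card X"
    using \<sigma> by (auto dest: permutations_of_setD length_finite_permutations_of_set)
  define cs where
    "cs = map (\<lambda>k. set (take k \<sigma>)) (filter (\<lambda>k. set (take k \<sigma>) \<in> F) [0..<Suc (card X)])"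
  have "sorted_wrt (\<lambda>i j. set (take i \<sigma>) \<subset> set (take j \<sigma>)) [0..<Suc (card X)]"
    using \<open>distinct \<sigma>\<close> len_\<sigma>
    by (intro sorted_wrt_mono_rel[OF _ sorted_wrt_upt] set_take_psubset) auto
  then have "sorted_wrt (\<subset>) cs"
    unfolding cs_def sorted_wrt_map by (rule sorted_wrt_filter)
  moreover have set_cs: "set cs = prefix_members F \<sigma>"
  proof
    show "set cs \<subseteq> prefix_members F \<sigma>"
      using \<open>distinct \<sigma>\<close> len_\<sigma> by (auto simp: cs_def prefix_members_def distinct_card)
    show "prefix_members F \<sigma> \<subseteq> set cs"
    proof
      fix B assume "B \<in> prefix_members F \<sigma>"
      then have "B \<in> F" and B: "set (take (card B) \<sigma>) = B"
        by (auto simp: prefix_members_def)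
      moreover have "card B \<le> card X"
        using \<open>B \<in> F\<close> F X by (auto intro: card_mono)
      ultimately have "card B \<in> set (filter (\<lambda>k. set (take k \<sigma>) \<in> F) [0..<Suc (card X)])"
        by (simp only: set_filter set_upt) (simp add: less_Suc_eq_le)
      then show "B \<in> set cs"
        using B unfolding cs_def by force
    qed
  qed
  ultimately show ?thesis
    using that by (auto simp: is_chain_in_def prefix_members_def)
qed

lemma card_prefix_members_le_chain_rank:
  assumes X: "finite X" and F: "F \<subseteq> Pow X" and \<sigma>: "\<sigma> \<in> permutations_of_set X"
    and A: "A \<in> prefix_members F \<sigma>"
  shows "card (prefix_members F \<sigma>) \<le> chain_rank F A"
proof -
  obtain cs where chain: "is_chain_in F cs" and set_cs: "set cs = prefix_members F \<sigma>"
    using chain_of_prefix_members[OF X F \<sigma>] .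
  have "finite F"
    using X F by (meson finite_Pow_iff finite_subset)
  have "card (prefix_members F \<sigma>) \<le> length cs"
    using set_cs card_length by metis
  also have "\<dots> \<le> chain_rank F A"
    using chain_rank_ge[OF \<open>finite F\<close> chain] A set_cs by auto
  finally show ?thesis .
qed

lemma prefix_weight_le_1:
  assumes "finite X" "F \<subseteq> Pow X" "\<sigma> \<in> permutations_of_set X"
  shows "prefix_weight F \<sigma> \<le> 1"
proof -
  let ?m = "card (prefix_members F \<sigma>)"
  have "finite (prefix_members F \<sigma>)"
    using assms(1,2) by (meson finite_Pow_iff finite_prefix_members finite_subset)
  have "prefix_weight F \<sigma> \<le> (\<Sum>A\<in>prefix_members F \<sigma>. 1 / real ?m)"
    unfolding prefix_weight_def
  proof (rule sum_mono)
    fix A assume A: "A \<in> prefix_members F \<sigma>"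
    then have "?m > 0"
      using \<open>finite (prefix_members F \<sigma>)\<close> card_gt_0_iff by blast
    then show "1 / real (chain_rank F A) \<le> 1 / real ?m"
      using card_prefix_members_le_chain_rank[OF assms A] by (simp add: frac_le)
  qed
  also have "\<dots> \<le> 1"
    by (cases "?m = 0") auto
  finally show ?thesis .
qed

lemma prefix_weight_eq_1D:
  assumes "finite X" "F \<subseteq> Pow X" "\<sigma> \<in> permutations_of_set X" "prefix_weight F \<sigma> = 1"
  shows "prefix_members F \<sigma> \<noteq> {}"
    and "\<And>A. A \<in> prefix_members F \<sigma> \<Longrightarrow> chain_rank F A = card (prefix_members F \<sigma>)"
proof -
  let ?S = "prefix_members F \<sigma>"
  have "finite ?S"
    using assms by (meson finite_Pow_iff finite_prefix_members finite_subset)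
  show ne: "?S \<noteq> {}"
    using assms(4) by (auto simp: prefix_weight_def)
  then have "card ?S > 0"
    using \<open>finite ?S\<close> by auto
  have le: "1 / real (chain_rank F A) \<le> 1 / real (card ?S)" if "A \<in> ?S" for A
    using card_prefix_members_le_chain_rank[OF assms(1-3) that] \<open>card ?S > 0\<close>
    by (simp add: frac_le)
  have "(\<Sum>A\<in>?S. 1 / real (card ?S) - 1 / real (chain_rank F A)) = 0"
    using assms(4) \<open>card ?S > 0\<close> by (simp add: sum_subtractf prefix_weight_def)
  then have "\<forall>A\<in>?S. 1 / real (card ?S) - 1 / real (chain_rank F A) = 0"
    using sum_nonneg_eq_0_iff[OF \<open>finite ?S\<close>,
        of "\<lambda>A. 1 / real (card ?S) - 1 / real (chain_rank F A)"] le by auto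
  then show "chain_rank F A = card ?S" if "A \<in> ?S" for A
    using that by simp
qed

lemma card_permutations_with_prefix:
  assumes "finite X" "A \<subseteq> X"
  shows "card {\<sigma> \<in> permutations_of_set X. set (take (card A) \<sigma>) = A}
         = fact (card A) * fact (card X - card A)"
proof -
  let ?k = "card A"
  let ?PA = "permutations_of_set A" and ?PB = "permutations_of_set (X - A)"
  have "finite A"
    using assms finite_subset by blast
  have "{\<sigma> \<in> permutations_of_set X. set (take ?k \<sigma>) = A} = case_prod (@) ` (?PA \<times> ?PB)"
  proof (intro equalityI subsetI)
    fix \<sigma> assume "\<sigma> \<in> {\<sigma> \<in> permutations_of_set X. set (take ?k \<sigma>) = A}"
    then have \<sigma>: "\<sigma> \<in> permutations_of_set X" and take: "set (take ?k \<sigma>) = A"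
      by auto
    have "distinct (take ?k \<sigma> @ drop ?k \<sigma>)" and "set (take ?k \<sigma> @ drop ?k \<sigma>) = X"
      using permutations_of_setD[OF \<sigma>] by simp_all
    then have "set (drop ?k \<sigma>) = X - A"
      using take by (auto simp del: append_take_drop_id)
    then have "(take ?k \<sigma>, drop ?k \<sigma>) \<in> ?PA \<times> ?PB"
      using take permutations_of_setD(2)[OF \<sigma>] by auto
    then show "\<sigma> \<in> case_prod (@) ` (?PA \<times> ?PB)"
      by (rule image_eqI[rotated]) simp
  next
    fix \<sigma> assume "\<sigma> \<in> case_prod (@) ` (?PA \<times> ?PB)"
    then obtain ys zs where ys: "ys \<in> ?PA" and zs: "zs \<in> ?PB" and \<sigma>: "\<sigma> = ys @ zs"
      by auto
    have "length ys = ?k"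
      using length_finite_permutations_of_set[OF ys] .
    then show "\<sigma> \<in> {\<sigma> \<in> permutations_of_set X. set (take ?k \<sigma>) = A}"
      using ys zs assms(2) unfolding \<sigma> by (auto simp: permutations_of_set_def)
  qed
  moreover have "inj_on (case_prod (@)) (?PA \<times> ?PB)"
  proof (rule inj_onI, clarify)
    fix ys zs ys' zs'
    assume "ys \<in> ?PA" "ys' \<in> ?PA" "ys @ zs = ys' @ zs'"
    moreover have "length ys = length ys'"
      using \<open>ys \<in> ?PA\<close> \<open>ys' \<in> ?PA\<close> length_finite_permutations_of_set by metis
    ultimately show "ys = ys' \<and> zs = zs'"
      by simp
  qed
  moreover have "card (X - A) = card X - ?k"
    using assms \<open>finite A\<close> by (simp add: card_Diff_subset)
  ultimately show ?thesis
    using assms \<open>finite A\<close> by (simp add: card_image card_cartesian_product)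
qed

lemma sum_prefix_weight:
  assumes X: "finite X" and F: "F \<subseteq> Pow X"
  shows "(\<Sum>\<sigma>\<in>permutations_of_set X. prefix_weight F \<sigma>)
         = fact (card X) * (\<Sum>A\<in>F. 1 / (real (card X choose card A) * real (chain_rank F A)))"
proof -
  let ?P = "permutations_of_set X"
  have "finite F"
    using X F by (meson finite_Pow_iff finite_subset)
  have "(\<Sum>\<sigma>\<in>?P. prefix_weight F \<sigma>)
        = (\<Sum>\<sigma>\<in>?P. \<Sum>A\<in>F. if set (take (card A) \<sigma>) = A then 1 / real (chain_rank F A) else 0)"
    unfolding prefix_weight_def prefix_members_def using \<open>finite F\<close> by (simp add: sum.inter_filter)
  also have "\<dots> = (\<Sum>A\<in>F. \<Sum>\<sigma>\<in>?P. if set (take (card A) \<sigma>) = A then 1 / real (chain_rank F A) else 0)"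
    by (rule sum.swap)
  also have "\<dots> = (\<Sum>A\<in>F. real (card {\<sigma>\<in>?P. set (take (card A) \<sigma>) = A}) / real (chain_rank F A))"
    by (simp add: sum.inter_filter[symmetric])
  also have "\<dots> = (\<Sum>A\<in>F. fact (card X) / (real (card X choose card A) * real (chain_rank F A)))"
  proof (rule sum.cong[OF refl])
    fix A assume "A \<in> F"
    then have "A \<subseteq> X" and "card A \<le> card X"
      using F X by (auto intro: card_mono)
    then have "real (card {\<sigma>\<in>?P. set (take (card A) \<sigma>) = A}) * real (card X choose card A)
               = fact (card X)"
      using card_permutations_with_prefix[OF X] binomial_fact_lemma[of "card A" "card X"]
      by (metis of_nat_fact of_nat_mult)
    moreover have "real (card X choose card A) > 0"
      using \<open>card A \<le> card X\<close> by simp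
    ultimately show "real (card {\<sigma>\<in>?P. set (take (card A) \<sigma>) = A}) / real (chain_rank F A)
        = fact (card X) / (real (card X choose card A) * real (chain_rank F A))"
      by (auto simp: divide_simps)
  qed
  finally show ?thesis
    by (simp add: sum_distrib_left)
qed

lemma rank_weighted_sum_le_1:
  assumes "finite X" "F \<subseteq> Pow X"
  shows "(\<Sum>A\<in>F. 1 / (real (card X choose card A) * real (chain_rank F A))) \<le> 1"
proof -
  have "(\<Sum>\<sigma>\<in>permutations_of_set X. prefix_weight F \<sigma>) \<le> (\<Sum>\<sigma>\<in>permutations_of_set X. 1)"
    using prefix_weight_le_1[OF assms] by (intro sum_mono)
  then show ?thesis
    using assms(1) by (simp add: sum_prefix_weight[OF assms])
qed

lemma rank_weighted_sum_eq_1_iff: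
  assumes "finite X" "F \<subseteq> Pow X"
  shows "(\<Sum>A\<in>F. 1 / (real (card X choose card A) * real (chain_rank F A))) = 1
         \<longleftrightarrow> (\<forall>\<sigma>\<in>permutations_of_set X. prefix_weight F \<sigma> = 1)"
proof -
  let ?P = "permutations_of_set X"
  have "finite ?P"
    using assms(1) by simp
  have "(\<Sum>A\<in>F. 1 / (real (card X choose card A) * real (chain_rank F A))) = 1
        \<longleftrightarrow> (\<Sum>\<sigma>\<in>?P. 1 - prefix_weight F \<sigma>) = 0"
    using assms(1) by (simp add: sum_subtractf sum_prefix_weight[OF assms])
  also have "\<dots> \<longleftrightarrow> (\<forall>\<sigma>\<in>?P. 1 - prefix_weight F \<sigma> = 0)"
    using prefix_weight_le_1[OF assms] by (intro sum_nonneg_eq_0_iff[OF \<open>finite ?P\<close>]) simp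
  finally show ?thesis
    by simp
qed

lemma set_take_swap_adjacent:
  assumes "j \<noteq> Suc (length d)"
  shows "set (take j (d @ a # b # r)) = set (take j (d @ b # a # r))"
proof (cases "j \<le> length d")
  case False
  then have "j - length d = Suc (Suc (j - length d - 2))"
    using assms by auto
  then show ?thesis
    by (simp add: insert_commute)
qed simp

definition exchange_closed :: "'a set \<Rightarrow> 'a set set \<Rightarrow> bool" where
  "exchange_closed X F \<longleftrightarrow> (\<forall>A\<in>F. \<forall>a\<in>A. \<forall>b\<in>X - A. insert b (A - {a}) \<in> F)"

definition level_closed :: "'a set \<Rightarrow> 'a set set \<Rightarrow> bool" where
  "level_closed X F \<longleftrightarrow> (\<forall>A\<in>F. \<forall>B. B \<subseteq> X \<and> card B = card A \<longrightarrow> B \<in> F)"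

text \<open>The permutations \<open>d @ a # b # r\<close> and \<open>d @ b # a # r\<close>, where \<open>set d = A - {a}\<close>, have the
  same initial segments except the one of length \<open>|A|\<close>, which is \<open>A\<close>, resp. the exchanged set.\<close>
lemma obtain_permutations_dropping_prefix_member:
  assumes X: "finite X" and F: "F \<subseteq> Pow X"
    and A: "A \<in> F" and a: "a \<in> A" and b: "b \<in> X - A" and B: "insert b (A - {a}) \<notin> F"
  obtains \<sigma>\<^sub>1 \<sigma>\<^sub>2 where "\<sigma>\<^sub>1 \<in> permutations_of_set X" "\<sigma>\<^sub>2 \<in> permutations_of_set X"
    "A \<in> prefix_members F \<sigma>\<^sub>1" "prefix_members F \<sigma>\<^sub>2 = prefix_members F \<sigma>\<^sub>1 - {A}"
proof -
  have "A \<subseteq> X" "finite A"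
    using A F X by (auto intro: finite_subset)
  obtain d where d: "set d = A - {a}" "distinct d"
    using finite_distinct_list[of "A - {a}"] \<open>finite A\<close> by blast
  obtain r where r: "set r = X - insert b A" "distinct r"
    using finite_distinct_list[of "X - insert b A"] X by blast
  define \<sigma>\<^sub>1 where "\<sigma>\<^sub>1 = d @ a # b # r"
  define \<sigma>\<^sub>2 where "\<sigma>\<^sub>2 = d @ b # a # r"
  have "\<sigma>\<^sub>1 \<in> permutations_of_set X" "\<sigma>\<^sub>2 \<in> permutations_of_set X"
    using d r a b \<open>A \<subseteq> X\<close> unfolding \<sigma>\<^sub>1_def \<sigma>\<^sub>2_def by (auto simp: permutations_of_set_def)
  moreover have card_A: "card A = Suc (length d)"
    using d a \<open>finite A\<close> by (metis card_Suc_Diff1 distinct_card)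
  then have "set (take (card A) \<sigma>\<^sub>1) = A" "set (take (card A) \<sigma>\<^sub>2) = insert b (A - {a})"
    using d a unfolding \<sigma>\<^sub>1_def \<sigma>\<^sub>2_def by auto
  then have "A \<in> prefix_members F \<sigma>\<^sub>1"
    and "C \<in> prefix_members F \<sigma>\<^sub>2 \<longleftrightarrow> C \<in> prefix_members F \<sigma>\<^sub>1 - {A}" for C
    using A B set_take_swap_adjacent[of "card C" d a b r] card_A
    unfolding prefix_members_def \<sigma>\<^sub>1_def \<sigma>\<^sub>2_def by (cases "card C = card A"; auto)+
  ultimately show ?thesis
    using that by blast
qed

text \<open>If \<open>F\<close> were not exchange closed, tightness for the two permutations above would give
  the members met by both rank \<open>m\<close> and \<open>m - 1\<close> at once.\<close>
lemma exchange_closed_if_prefix_weights_eq_1: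
  assumes X: "finite X" and F: "F \<subseteq> Pow X"
    and tight: "\<And>\<sigma>. \<sigma> \<in> permutations_of_set X \<Longrightarrow> prefix_weight F \<sigma> = 1"
  shows "exchange_closed X F"
  unfolding exchange_closed_def
proof (intro ballI, rule ccontr)
  fix A a b assume "A \<in> F" "a \<in> A" "b \<in> X - A" "insert b (A - {a}) \<notin> F"
  then obtain \<sigma>\<^sub>1 \<sigma>\<^sub>2 where perms: "\<sigma>\<^sub>1 \<in> permutations_of_set X" "\<sigma>\<^sub>2 \<in> permutations_of_set X"
    and "A \<in> prefix_members F \<sigma>\<^sub>1" and S\<^sub>2: "prefix_members F \<sigma>\<^sub>2 = prefix_members F \<sigma>\<^sub>1 - {A}"
    using obtain_permutations_dropping_prefix_member[OF X F] by metis
  moreover obtain C where C: "C \<in> prefix_members F \<sigma>\<^sub>2"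
    using prefix_weight_eq_1D(1)[OF X F perms(2) tight[OF perms(2)]] by blast
  moreover have "finite F"
    using X F by (meson finite_Pow_iff finite_subset)
  ultimately have "card (prefix_members F \<sigma>\<^sub>2) = card (prefix_members F \<sigma>\<^sub>1) - 1"
    "card (prefix_members F \<sigma>\<^sub>1) > 0"
    using finite_prefix_members by (auto simp: card_gt_0_iff)
  moreover have "chain_rank F C = card (prefix_members F \<sigma>\<^sub>1)"
    using C S\<^sub>2 prefix_weight_eq_1D(2)[OF X F perms(1) tight[OF perms(1)]] by blast
  moreover have "chain_rank F C = card (prefix_members F \<sigma>\<^sub>2)"
    using C prefix_weight_eq_1D(2)[OF X F perms(2) tight[OF perms(2)]] by blast
  ultimately show False
    by simp
qed

lemma level_closed_if_exchange_closed:
  assumes X: "finite X" and F: "F \<subseteq> Pow X" and exchange: "exchange_closed X F"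
  shows "level_closed X F"
proof -
  have "B \<in> F" if "A \<in> F" "B \<subseteq> X" "card B = card A" for A B
    using that
  proof (induction "card (A - B)" arbitrary: A rule: less_induct)
    case less
    have "finite A" "finite B"
      using less.prems F X by (auto intro: finite_subset)
    show ?case
    proof (cases "A \<subseteq> B")
      case True
      then show ?thesis
        using less.prems card_subset_eq[OF \<open>finite B\<close>] by metis
    next
      case False
      then obtain a where a: "a \<in> A" "a \<notin> B"
        by auto
      have "\<not> B \<subseteq> A"
        using a less.prems \<open>finite A\<close> card_subset_eq by metis
      then obtain b where b: "b \<in> B" "b \<notin> A"
        by auto
      define A' where "A' = insert b (A - {a})"
      have "A' \<in> F"
        using exchange less.prems a b unfolding A'_def exchange_closed_def by blast
      moreover have "card A' = card A"
        using \<open>finite A\<close> a b unfolding A'_def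
        by (simp add: card_insert_disjoint card_Diff_singleton card_gt_0_iff[symmetric]
            del: card_gt_0_iff) (metis card_0_eq empty_iff Suc_pred not_gr0)
      moreover have "A' - B = (A - B) - {a}"
        unfolding A'_def using b by auto
      then have "card (A' - B) < card (A - B)"
        using a \<open>finite A\<close> by (metis DiffI card_Diff1_less finite_Diff)
      ultimately show ?thesis
        using less.hyps less.prems(2,3) by simp
    qed
  qed
  then show ?thesis
    unfolding level_closed_def by blast
qed

lemma card_prefix_members_if_level_closed:
  assumes X: "finite X" and F: "F \<subseteq> Pow X" "level_closed X F"
    and \<sigma>: "\<sigma> \<in> permutations_of_set X"
  shows "card (prefix_members F \<sigma>) = card (card ` F)"
proof -
  let ?I = "card ` F"
  have mem_F: "C \<in> F \<longleftrightarrow> C \<subseteq> X \<and> card C \<in> ?I" for C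
    using F unfolding level_closed_def by auto
  have "distinct \<sigma>" "set \<sigma> = X" "length \<sigma> = card X"
    using \<sigma> by (auto dest: permutations_of_setD length_finite_permutations_of_set)
  moreover have "card C \<le> card X" if "C \<in> F" for C
    using that F X by (auto intro: card_mono)
  ultimately have card_take: "card (set (take k \<sigma>)) = k" if "k \<in> ?I" for k
    using that by (auto simp: distinct_card)
  have members: "prefix_members F \<sigma> = (\<lambda>k. set (take k \<sigma>)) ` ?I"
  proof (intro equalityI subsetI)
    fix C assume "C \<in> prefix_members F \<sigma>"
    then show "C \<in> (\<lambda>k. set (take k \<sigma>)) ` ?I"
      unfolding prefix_members_def by (auto intro: rev_image_eqI)
  next
    fix C assume "C \<in> (\<lambda>k. set (take k \<sigma>)) ` ?I"
    then obtain k where k: "k \<in> ?I" and C: "C = set (take k \<sigma>)"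
      by blast
    have "C \<subseteq> X"
      using \<open>set \<sigma> = X\<close> set_take_subset unfolding C by metis
    moreover have "card C \<in> ?I"
      using card_take[OF k] k unfolding C by simp
    ultimately have "C \<in> F"
      using mem_F by blast
    then show "C \<in> prefix_members F \<sigma>"
      using card_take[OF k] unfolding C prefix_members_def by simp
  qed
  have "inj_on (\<lambda>k. set (take k \<sigma>)) ?I"
    by (rule inj_onI) (metis card_take)
  then show ?thesis
    by (simp add: members card_image)
qed

lemma prefix_weight_eq_1_if_level_closed:
  assumes X: "finite X" and F: "F \<subseteq> Pow X" "F \<noteq> {}" "level_closed X F"
    and \<sigma>: "\<sigma> \<in> permutations_of_set X"
  shows "prefix_weight F \<sigma> = 1"
proof -
  let ?I = "card ` F"
  have "finite F"
    using X F by (meson finite_Pow_iff finite_subset)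
  then have "card ?I > 0"
    using F(2) by (simp add: card_gt_0_iff)
  have card_members: "card (prefix_members F \<sigma>) = card ?I"
    using card_prefix_members_if_level_closed[OF X F(1,3) \<sigma>] .
  have "chain_rank F A = card ?I" if "A \<in> prefix_members F \<sigma>" for A
  proof (rule antisym)
    show "chain_rank F A \<le> card ?I"
      using that \<open>finite F\<close> F(1) X
      by (intro chain_rank_le_card_levels) (auto simp: prefix_members_def intro: rev_finite_subset)
    show "card ?I \<le> chain_rank F A"
      using card_prefix_members_le_chain_rank[OF X F(1) \<sigma> that] card_members by simp
  qed
  then show ?thesis
    using card_members \<open>card ?I > 0\<close> by (simp add: prefix_weight_def)
qed

lemma prefix_weights_eq_1_iff:
  assumes "finite X" "F \<subseteq> Pow X"
  shows "(\<forall>\<sigma>\<in>permutations_of_set X. prefix_weight F \<sigma> = 1) \<longleftrightarrow> F \<noteq> {} \<and> level_closed X F"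
proof
  assume tight: "\<forall>\<sigma>\<in>permutations_of_set X. prefix_weight F \<sigma> = 1"
  obtain \<sigma> where \<sigma>: "\<sigma> \<in> permutations_of_set X"
    using assms(1) by fastforce
  have "F \<noteq> {}"
    using prefix_weight_eq_1D(1)[OF assms \<sigma>] tight \<sigma> by (auto simp: prefix_members_def)
  moreover have "level_closed X F"
    using tight assms
    by (intro level_closed_if_exchange_closed exchange_closed_if_prefix_weights_eq_1) auto
  ultimately show "F \<noteq> {} \<and> level_closed X F" ..
qed (use prefix_weight_eq_1_if_level_closed[OF assms] in blast)

lemma level_closed_iff_union_of_levels:
  assumes "F \<subseteq> Pow {1..n}"
  shows "F \<noteq> {} \<and> level_closed {1..n} F
         \<longleftrightarrow> (\<exists>I. I \<noteq> {} \<and> I \<subseteq> {0..n} \<and> F = (\<Union>i\<in>I. level n i))"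
proof
  assume "F \<noteq> {} \<and> level_closed {1..n} F"
  moreover have "card A \<le> n" if "A \<in> F" for A
    using that assms card_mono[of "{1..n}" A] by auto
  ultimately show "\<exists>I. I \<noteq> {} \<and> I \<subseteq> {0..n} \<and> F = (\<Union>i\<in>I. level n i)"
    using assms by (intro exI[of _ "card ` F"]) (auto simp: level_def level_closed_def)
next
  assume "\<exists>I. I \<noteq> {} \<and> I \<subseteq> {0..n} \<and> F = (\<Union>i\<in>I. level n i)"
  then obtain I i where "i \<in> I" "I \<subseteq> {0..n}" and F: "F = (\<Union>i\<in>I. level n i)"
    by blast
  then have "{1..i} \<in> level n i"
    by (auto simp: level_def)
  then have "F \<noteq> {}"
    using \<open>i \<in> I\<close> F by blast
  moreover have "level_closed {1..n} F"
    unfolding F by (auto simp: level_def level_closed_def)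
  ultimately show "F \<noteq> {} \<and> level_closed {1..n} F" ..
qed

theorem theorem4:
  fixes n :: nat and \<A> :: "nat set set"
  assumes "\<A> \<subseteq> Pow {1..n}"
  shows "(\<Sum>A\<in>\<A>. 1 / (real (n choose card A) * real (chain_rank \<A> A))) \<le> 1 \<and>
         ((\<Sum>A\<in>\<A>. 1 / (real (n choose card A) * real (chain_rank \<A> A))) = 1 \<longleftrightarrow>
         (\<exists>I. I \<noteq> {} \<and> I \<subseteq> {0..n} \<and> \<A> = (\<Union>i\<in>I. level n i)))"
proof -
  have X: "finite {1..n}" and "card {1..n} = n"
    by simp_all
  then show ?thesis
    using rank_weighted_sum_le_1[OF X assms] rank_weighted_sum_eq_1_iff[OF X assms]
      prefix_weights_eq_1_iff[OF X assms] level_closed_iff_union_of_levels[OF assms]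
    by simp
qed

end
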